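(* Let $A_1,A_2:\mathbb{R}^n\rightrightarrows\mathbb{R}^n$ be monotone linear relations. Then $q_{A_1}+q_{A_2}=q_{A_1+A_2}$. If in addition $\operatorname{dom}A_1\subseteq\operatorname{dom}A_2$ and $A_1-A_2$ is monotone, then $q_{A_1}-q_{A_2}=q_{A_1-A_2}$.
   Context: A linear relation is an operator whose graph is a linear subspace; monotone means $\langle x^*-y^*,x-y\rangle\ge0$ on the graph. For a monotone linear relation $B$, $q_B(x)=\frac12\langle x,Bx\rangle$ if $x\in\operatorname{dom}B$ (single-valued) and $\infty$ otherwise. $A_1\pm A_2$ are pointwise Minkowski sums/differences with $\operatorname{dom}(A_1\pm A_2)=\operatorname{dom}A_1\cap\operatorname{dom}A_2$. Convention: $\infty-t=\infty$ for real $t$. *)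

theory Defs
  imports "HOL-Analysis.Analysis"
begin

definition graph :: "('a \<Rightarrow> 'b set) \<Rightarrow> ('a \<times> 'b) set" where
  "graph A = {(x, y). y \<in> A x}"

definition rdom :: "('a \<Rightarrow> 'b set) \<Rightarrow> 'a set" where
  "rdom A = {x. A x \<noteq> {}}"

definition linear_relation :: "('a::real_vector \<Rightarrow> 'b::real_vector set) \<Rightarrow> bool" where
  "linear_relation A \<longleftrightarrow> subspace (graph A)"

definition monotone_rel :: "('a::real_inner \<Rightarrow> 'a set) \<Rightarrow> bool" where
  "monotone_rel A \<longleftrightarrow>
     (\<forall>(x, x') \<in> graph A. \<forall>(y, y') \<in> graph A. inner (x' - y') (x - y) \<ge> 0)"

text \<open>Pointwise Minkowski sum / difference; the domain is automatically the intersection.\<close>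
definition rel_plus :: "('a \<Rightarrow> 'b::ab_group_add set) \<Rightarrow> ('a \<Rightarrow> 'b set) \<Rightarrow> 'a \<Rightarrow> 'b set" where
  "rel_plus A1 A2 x = {a + b | a b. a \<in> A1 x \<and> b \<in> A2 x}"

definition rel_minus :: "('a \<Rightarrow> 'b::ab_group_add set) \<Rightarrow> ('a \<Rightarrow> 'b set) \<Rightarrow> 'a \<Rightarrow> 'b set" where
  "rel_minus A1 A2 x = {a - b | a b. a \<in> A1 x \<and> b \<in> A2 x}"

text \<open>q_B(x) = 1/2 <x, Bx> on dom B (well defined for monotone linear relations), \<infinity> otherwise.\<close>
definition qB :: "('a::real_inner \<Rightarrow> 'a set) \<Rightarrow> 'a \<Rightarrow> ereal" where
  "qB B x = (if x \<in> rdom B then ereal (inner x (SOME y. y \<in> B x) / 2) else \<infinity>)"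

definition ediff :: "ereal \<Rightarrow> ereal \<Rightarrow> ereal" where
  "ediff a b = (if a = \<infinity> then \<infinity> else a - b)"

end

theory Submission
  imports Defs
begin

text \<open>For a monotone linear relation A and y, y' \<in> A x, linearity puts (0, s(y - y')) in the
  graph for every real s, and monotonicity against (x, y) gives \<langle>y - s(y - y'), x\<rangle> \<ge> 0
  for all s, which forces \<langle>y - y', x\<rangle> = 0. So \<langle>x, y\<rangle> does not depend on the choice of
  y \<in> A x, and q is additive over Minkowski sums and differences of the relations.\<close>

lemma monotone_linear_relation_inner_eq:
  fixes A :: "'a::real_inner \<Rightarrow> 'a set"
  assumes lin: "linear_relation A" and mon: "monotone_rel A"
    and y: "y \<in> A x" and y': "y' \<in> A x"
  shows "inner x y = inner x y'"
proof -
  have S: "subspace (graph A)" using lin by (simp add: linear_relation_def)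
  have gy: "(x, y) \<in> graph A" using y by (simp add: graph_def)
  have gy': "(x, y') \<in> graph A" using y' by (simp add: graph_def)
  define d where "d = y - y'"
  have "(0, d) \<in> graph A" using subspace_diff[OF S gy gy'] by (simp add: d_def)
  then have "(0, s *\<^sub>R d) \<in> graph A" for s
    using subspace_scale[OF S, of "(0, d)" s] by simp
  then have nonneg: "inner (y - s *\<^sub>R d) x \<ge> 0" for s
    using mon gy unfolding monotone_rel_def by fastforce
  have "inner d x = 0"
  proof (rule ccontr)
    assume nz: "inner d x \<noteq> 0"
    have "0 \<le> inner (y - ((inner y x + 1) / inner d x) *\<^sub>R d) x" by (rule nonneg)
    also have "\<dots> = -1" using nz by (simp add: inner_diff_left field_simps)
    finally show False by simp
  qed
  then show ?thesis by (simp add: d_def inner_diff_left inner_diff_right inner_commute)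
qed

lemma qB_outside_rdom: "x \<notin> rdom B \<Longrightarrow> qB B x = \<infinity>"
  by (simp add: qB_def)

lemma qB_neq_minf: "qB B x \<noteq> -\<infinity>"
  by (simp add: qB_def)

lemma qB_eq_if_inner_const:
  assumes y: "y \<in> B x" and const: "\<And>z. z \<in> B x \<Longrightarrow> inner x z = inner x y"
  shows "qB B x = ereal (inner x y / 2)"
proof -
  have "x \<in> rdom B" using y by (auto simp: rdom_def)
  moreover have "(SOME z. z \<in> B x) \<in> B x" using y by (rule someI)
  ultimately show ?thesis using const by (simp add: qB_def)
qed

lemma qB_eq_inner:
  assumes "linear_relation A" "monotone_rel A" "y \<in> A x"
  shows "qB A x = ereal (inner x y / 2)"
  using assms(3) monotone_linear_relation_inner_eq[OF assms(1,2) _ assms(3)]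
  by (rule qB_eq_if_inner_const)

lemma rdom_rel_plus: "rdom (rel_plus A B) = rdom A \<inter> rdom B"
  unfolding rdom_def rel_plus_def by blast

lemma rdom_rel_minus: "rdom (rel_minus A B) = rdom A \<inter> rdom B"
  unfolding rdom_def rel_minus_def by blast

lemma qB_rel_plus:
  fixes A1 A2 :: "'a::real_inner \<Rightarrow> 'a set"
  assumes "linear_relation A1" "monotone_rel A1" "linear_relation A2" "monotone_rel A2"
  shows "qB A1 x + qB A2 x = qB (rel_plus A1 A2) x"
proof (cases "x \<in> rdom A1 \<inter> rdom A2")
  case True
  then obtain a b where a: "a \<in> A1 x" and b: "b \<in> A2 x" by (auto simp: rdom_def)
  have "a + b \<in> rel_plus A1 A2 x" using a b by (auto simp: rel_plus_def)
  moreover have "inner x c = inner x (a + b)" if c: "c \<in> rel_plus A1 A2 x" for c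
  proof -
    obtain a' b' where "c = a' + b'" "a' \<in> A1 x" "b' \<in> A2 x"
      using c by (auto simp: rel_plus_def)
    then show ?thesis
      using monotone_linear_relation_inner_eq[OF assms(1,2) a]
        monotone_linear_relation_inner_eq[OF assms(3,4) b]
      by (simp add: inner_add_right)
  qed
  ultimately have "qB (rel_plus A1 A2) x = ereal (inner x (a + b) / 2)"
    by (rule qB_eq_if_inner_const)
  then show ?thesis
    using qB_eq_inner[OF assms(1,2) a] qB_eq_inner[OF assms(3,4) b]
    by (simp add: inner_add_right add_divide_distrib)
next
  case False
  then show ?thesis
    using qB_outside_rdom[of x] qB_neq_minf[of A1 x] qB_neq_minf[of A2 x]
    by (auto simp: rdom_rel_plus)
qed

lemma qB_rel_minus:
  fixes A1 A2 :: "'a::real_inner \<Rightarrow> 'a set"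
  assumes "linear_relation A1" "monotone_rel A1" "linear_relation A2" "monotone_rel A2"
    and dom: "rdom A1 \<subseteq> rdom A2"
  shows "ediff (qB A1 x) (qB A2 x) = qB (rel_minus A1 A2) x"
proof (cases "x \<in> rdom A1")
  case True
  moreover have "x \<in> rdom A2" using True dom by blast
  ultimately obtain a b where a: "a \<in> A1 x" and b: "b \<in> A2 x" by (auto simp: rdom_def)
  have "a - b \<in> rel_minus A1 A2 x" using a b by (auto simp: rel_minus_def)
  moreover have "inner x c = inner x (a - b)" if c: "c \<in> rel_minus A1 A2 x" for c
  proof -
    obtain a' b' where "c = a' - b'" "a' \<in> A1 x" "b' \<in> A2 x"
      using c by (auto simp: rel_minus_def)
    then show ?thesis
      using monotone_linear_relation_inner_eq[OF assms(1,2) a]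
        monotone_linear_relation_inner_eq[OF assms(3,4) b]
      by (simp add: inner_diff_right)
  qed
  ultimately have "qB (rel_minus A1 A2) x = ereal (inner x (a - b) / 2)"
    by (rule qB_eq_if_inner_const)
  then show ?thesis
    using qB_eq_inner[OF assms(1,2) a] qB_eq_inner[OF assms(3,4) b]
    by (simp add: ediff_def inner_diff_right diff_divide_distrib)
next
  case False
  then show ?thesis by (simp add: qB_outside_rdom rdom_rel_minus ediff_def)
qed

theorem proposition4p22:
  fixes A1 A2 :: "real^'n \<Rightarrow> (real^'n) set"
  assumes "linear_relation A1" and "monotone_rel A1"
    and "linear_relation A2" and "monotone_rel A2"
  shows "(\<forall>x. qB A1 x + qB A2 x = qB (rel_plus A1 A2) x)
    \<and> (rdom A1 \<subseteq> rdom A2 \<and> monotone_rel (rel_minus A1 A2) \<longrightarrow>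
         (\<forall>x. ediff (qB A1 x) (qB A2 x) = qB (rel_minus A1 A2) x))"
  using qB_rel_plus[OF assms] qB_rel_minus[OF assms] by blast

end
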